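(* Let $m \geq 2$ be an integer. Let $P_m(z) \in \mathbb{Z}[[z]]$ be the unique formal power series with constant term $1$ satisfying $$P_m = 1 + z\,(P_m)^{(m-1)^2}.$$ Define the integers $\alpha_n$ ($n \geq 1$) by the formal product factorization $$P_m(z) = \prod_{n=1}^{\infty} \bigl(1 - (-1)^{mn} z^n\bigr)^{\alpha_n},$$ and set $\Omega(n\gamma_c) := \dfrac{m\,\alpha_n}{n}$. Then for every $n \geq 1$, $$\Omega(n \gamma_{c}) = \frac{m}{(m-1)^2 n^2}\sum_{d\mid n} (-1)^{m d + 1}\, \mu\!\left(\frac{n}{d} \right) \binom{(m-1)^2 d}{d},$$ where $\mu$ is the Möbius function.
   Context: In the paper, $\Omega(n\gamma_c)$ denotes the BPS index (second helicity supertrace) of the charge $n\gamma_c$ for a four-dimensional $\mathcal{N}=2$ theory whose spectral network at the critical phase is an "$m$-herd"; the paper shows that the street factor generating function $P_m$ of such a network satisfies the displayed algebraic equation and that $\Omega(n\gamma_c) = m\alpha_n/n$ with $\alpha_n$ the exponents of the displayed factorization. The product factorization is a formal one: the exponents $\alpha_n$ are uniquely determined by comparing coefficients of $\log P_m$ order by order in $z$. *)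

theory Defs
  imports "HOL-Computational_Algebra.Computational_Algebra"
begin

definition mobius :: "nat \<Rightarrow> int" where
  "mobius n = (if squarefree n then (-1) ^ card (prime_factors n) else 0)"

definition fps_ipow :: "rat fps \<Rightarrow> int \<Rightarrow> rat fps" where
  "fps_ipow f k = (if 0 \<le> k then f ^ nat k else (inverse f) ^ nat (- k))"

text \<open>The formal infinite product factorisation
  P = prod_{n>=1} (1 - (-1)^(m n) z^n)^(alpha n), stated coefficientwise:
  the coefficient of z^N only depends on the factors with n \<le> N.\<close>
definition herd_factorization :: "nat \<Rightarrow> rat fps \<Rightarrow> (nat \<Rightarrow> int) \<Rightarrow> bool" where
  "herd_factorization m P \<alpha> \<longleftrightarrow>
     (\<forall>N. fps_nth P N =
        fps_nth (\<Prod>n\<in>{1..N}. fps_ipow (1 - of_int ((-1) ^ (m * n)) * fps_X ^ n) (\<alpha> n)) N)"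

end

theory Submission
  imports Defs
begin

text \<open>With k = (m-1)^2, Lagrange inversion gives [z^N] P^a = a/N * binom(kN+a-1, N-1), hence the
  logarithmic derivative z P'/P = sum_{N>=1} binom(kN, N)/k z^N. The logarithmic derivative of the
  product is -sum_n n alpha_n sum_{q>=1} (-1)^(mnq) z^(nq); comparing coefficients of z^N gives
  sum_{e|N} e alpha_e = -(-1)^(mN) binom(kN, N)/k, and Moebius inversion yields the formula.
  The exponents exist because the n-th factor is 1 up to degree n-1, so alpha_N is forced by the
  coefficient of z^N; it is an integer since P has integer coefficients and the signs are units.\<close>

section \<open>Moebius inversion\<close>

lemma mobius_prime_mult:
  assumes p: "prime p" and "\<not> p dvd d" and "d > 0"
  shows "mobius (p * d) = - mobius d"
proof -
  have "coprime p d" using assms by (simp add: prime_imp_coprime)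
  then have "squarefree (p * d) \<longleftrightarrow> squarefree d"
    using squarefree_mult_coprime squarefree_prime[OF p] by (metis dvd_triv_right squarefree_mono)
  moreover have "prime_factors (p * d) = insert p (prime_factors d)"
    using prime_factors_product[of p d] assms prime_prime_factors[OF p] by auto
  moreover have "p \<notin> prime_factors d" using assms by auto
  ultimately show ?thesis by (simp add: mobius_def)
qed

lemma mobius_eq_0_if_square_dvd:
  assumes "prime p" and "p ^ 2 dvd d"
  shows "mobius d = 0"
proof -
  have "\<not> squarefree d" using assms unfolding squarefree_def by (metis not_prime_unit)
  then show ?thesis by (simp add: mobius_def)
qed

text \<open>Every divisor of \<open>n\<close> is either coprime to \<open>p\<close>, or \<open>p\<close> times such a divisor, or divisible by \<open>p\<^sup>2\<close>.\<close>
lemma sum_divisors_split_prime: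
  fixes f :: "nat \<Rightarrow> 'a::comm_monoid_add"
  assumes p: "prime p" and "p dvd n" and "n > 0"
  shows "(\<Sum>d | d dvd n. f d) =
           (\<Sum>d | d dvd n \<and> \<not> p dvd d. f d + f (p * d)) + (\<Sum>d | d dvd n \<and> p ^ 2 dvd d. f d)"
proof -
  define A where "A = {d. d dvd n \<and> \<not> p dvd d}"
  define B where "B = {d. d dvd n \<and> p dvd d \<and> \<not> p ^ 2 dvd d}"
  define C where "C = {d. d dvd n \<and> p ^ 2 dvd d}"
  have fin: "finite A" "finite B" "finite C"
    using \<open>n > 0\<close> by (auto simp: A_def B_def C_def)
  have "{d. d dvd n} = A \<union> (B \<union> C)" by (auto simp: A_def B_def C_def)
  moreover have "A \<inter> (B \<union> C) = {}" "B \<inter> C = {}" by (auto simp: A_def B_def C_def)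
  ultimately have "(\<Sum>d | d dvd n. f d) = sum f A + (sum f B + sum f C)"
    using fin by (simp add: sum.union_disjoint)
  moreover have "sum f B = (\<Sum>d\<in>A. f (p * d))"
  proof (rule sum.reindex_bij_witness[where i = "\<lambda>d. p * d" and j = "\<lambda>d. d div p"])
    fix a assume "a \<in> B"
    then have a: "a dvd n" "p dvd a" "\<not> p ^ 2 dvd a" by (auto simp: B_def)
    then show "p * (a div p) = a" by simp
    have "\<not> p dvd a div p"
    proof
      assume "p dvd a div p"
      then have "p * p dvd p * (a div p)" by simp
      then show False using a by (simp add: power2_eq_square)
    qed
    moreover have "a div p dvd n" using a by (metis dvd_div_mult_self dvd_mult_left)
    ultimately show "a div p \<in> A" by (simp add: A_def)
  next
    fix a assume a: "a \<in> A"
    then show "p * a div p = a" using p by (simp add: prime_gt_0_nat)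
    have "coprime p a" using a p by (simp add: A_def prime_imp_coprime)
    then have "p * a dvd n" using a assms by (auto simp: A_def divides_mult)
    then show "p * a \<in> B"
      using a p by (auto simp: A_def B_def power2_eq_square prime_gt_0_nat)
  qed (auto simp: B_def)
  ultimately show ?thesis by (simp add: A_def C_def sum.distrib add.assoc)
qed

lemma sum_mobius_divisors:
  assumes "n > 0"
  shows "(\<Sum>d | d dvd n. of_int (mobius d) :: 'a::ring_1) = (if n = 1 then 1 else 0)"
proof (cases "n = 1")
  case False
  then obtain p where p: "prime p" "p dvd n" using assms prime_factor_nat[of n] by auto
  have "mobius d + mobius (p * d) = 0" if "d dvd n" "\<not> p dvd d" for d
    using mobius_prime_mult[OF p(1) that(2)] that assms by (auto intro: Nat.gr0I)
  moreover have "mobius d = 0" if "p ^ 2 dvd d" for d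
    using mobius_eq_0_if_square_dvd[OF p(1) that] .
  ultimately have "(\<Sum>d | d dvd n. mobius d) = 0"
    using sum_divisors_split_prime[OF p assms, of mobius] by simp
  then show ?thesis using False by (metis of_int_0 of_int_sum)
qed (simp add: mobius_def)

lemma sum_mobius_over_multiples:
  assumes "N = e * c" and "N > 0"
  shows "(\<Sum>d | d dvd N \<and> e dvd d. of_int (mobius (N div d)) :: 'a::ring_1) =
           (\<Sum>t | t dvd c. of_int (mobius t))"
proof (rule sum.reindex_bij_witness[where i = "\<lambda>t. N div t" and j = "\<lambda>d. N div d"])
  have pos: "c > 0" "e > 0" using assms by auto
  fix d assume "d \<in> {d. d dvd N \<and> e dvd d}"
  then obtain a b where a: "N = d * a" and b: "d = e * b" by (auto elim!: dvdE)
  then have "c = b * a" using assms pos by (simp add: mult.assoc)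
  then show "N div d \<in> {t. t dvd c}" using a b pos by auto
  show "N div (N div d) = d" using a pos assms by auto
next
  have pos: "c > 0" "e > 0" using assms by auto
  fix t assume "t \<in> {t. t dvd c}"
  then obtain a where a: "c = t * a" by auto
  then have "t > 0" using pos by (auto intro: gr0I)
  then have "N div t = e * a" using a assms by simp
  then show "N div t \<in> {d. d dvd N \<and> e dvd d}" "N div (N div t) = t"
    using a assms \<open>t > 0\<close> pos by auto
qed simp

lemma mobius_inversion:
  fixes g F :: "nat \<Rightarrow> 'a::comm_ring_1"
  assumes F: "\<And>n. n > 0 \<Longrightarrow> F n = (\<Sum>e | e dvd n. g e)" and "N > 0"
  shows "g N = (\<Sum>d | d dvd N. of_int (mobius (N div d)) * F d)"
proof -
  define D where "D = {d. d dvd N}"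
  have finD: "finite D" unfolding D_def using \<open>N > 0\<close> by simp
  have "(\<Sum>d\<in>D. of_int (mobius (N div d)) * F d)
      = (\<Sum>d\<in>D. \<Sum>e\<in>{e. e \<in> D \<and> e dvd d}. of_int (mobius (N div d)) * g e)"
  proof (rule sum.cong)
    fix d assume d: "d \<in> D"
    then have "F d = (\<Sum>e | e dvd d. g e)" using F \<open>N > 0\<close> by (auto simp: D_def intro: Nat.gr0I)
    also have "{e. e dvd d} = {e. e \<in> D \<and> e dvd d}" using d by (auto simp: D_def intro: dvd_trans)
    finally show "of_int (mobius (N div d)) * F d =
        (\<Sum>e\<in>{e. e \<in> D \<and> e dvd d}. of_int (mobius (N div d)) * g e)"
      by (simp add: sum_distrib_left)
  qed simp
  also have "\<dots> = (\<Sum>e\<in>D. \<Sum>d\<in>{d. d \<in> D \<and> e dvd d}. of_int (mobius (N div d)) * g e)"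
    by (rule sum.swap_restrict[OF finD finD])
  also have "\<dots> = (\<Sum>e\<in>D. if e = N then g e else 0)"
  proof (rule sum.cong)
    fix e assume "e \<in> D"
    then obtain c where c: "N = e * c" by (auto simp: D_def)
    have "(\<Sum>d\<in>{d. d \<in> D \<and> e dvd d}. of_int (mobius (N div d)) * g e) =
          (\<Sum>t | t dvd c. of_int (mobius t)) * g e"
      unfolding sum_distrib_right[symmetric] using sum_mobius_over_multiples[OF c \<open>N > 0\<close>, where 'a='a] by (simp add: D_def)
    also have "\<dots> = (if e = N then g e else 0)"
      using c \<open>N > 0\<close> by (simp add: sum_mobius_divisors)
    finally show "(\<Sum>d\<in>{d. d \<in> D \<and> e dvd d}. of_int (mobius (N div d)) * g e) =
        (if e = N then g e else 0)" .
  qed simp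
  also have "\<dots> = g N" using finD by (simp add: D_def)
  finally show ?thesis by (simp add: D_def)
qed

section \<open>Lagrange inversion for \<open>P = 1 + z P\<^sup>k\<close>\<close>

lemma sum_times_choose_times_choose:
  fixes a N K :: nat
  assumes "N \<ge> 1"
  shows "(\<Sum>j=1..N. j * (a choose j) * (K choose (N - j))) = a * ((K + a - 1) choose (N - 1))"
proof -
  obtain N' where N': "N = Suc N'" using assms by (cases N) auto
  have "(\<Sum>j=1..N. j * (a choose j) * (K choose (N - j)))
      = a * (\<Sum>j=1..N. ((a - 1) choose (j - 1)) * (K choose (N - j)))"
    by (simp add: sum_distrib_left times_binomial_minus1_eq mult.assoc)
  also have "(\<Sum>j=1..N. ((a - 1) choose (j - 1)) * (K choose (N - j)))
      = (\<Sum>i\<le>N - 1. ((a - 1) choose i) * (K choose (N - 1 - i)))"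
    unfolding N' using sum.shift_bounds_cl_Suc_ivl[of "\<lambda>j. ((a - 1) choose (j - 1)) * (K choose (Suc N' - j))" 0 N']
    by (simp add: atMost_atLeast0)
  also have "\<dots> = (a - 1 + K) choose (N - 1)" by (rule vandermonde)
  finally show ?thesis by (cases a) (simp_all add: add.commute)
qed

lemma fps_X_mult_deriv_nth: "(fps_X * fps_deriv f) $ n = of_nat n * f $ n"
  for f :: "'a::comm_semiring_1 fps"
  by (cases n) (simp_all add: fps_X_mult_nth)

locale lagrange_series =
  fixes k :: nat and P :: "rat fps"
  assumes k_pos: "k \<ge> 1" and nth_0: "P $ 0 = 1" and fixpoint: "P = 1 + fps_X * P ^ k"
begin

lemma power_nth_0 [simp]: "(P ^ n) $ 0 = 1"
  by (simp add: fps_nth_power_0 nth_0)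

lemma power_nth_recursion:
  assumes "N \<ge> 1"
  shows "(P ^ a) $ N = (\<Sum>j=1..N. of_nat (a choose j) * (P ^ (k * j)) $ (N - j))"
proof -
  have "P ^ a = (fps_X * P ^ k + 1) ^ a" using fixpoint by (simp add: add.commute)
  also have "\<dots> = (\<Sum>j\<le>a. of_nat (a choose j) * (fps_X ^ j * P ^ (k * j)))"
    by (simp add: binomial_ring power_mult_distrib power_mult mult.assoc)
  finally have "(P ^ a) $ N = (\<Sum>j\<le>a. of_nat (a choose j) * (if N < j then 0 else (P ^ (k * j)) $ (N - j)))"
    by (simp add: fps_sum_nth fps_X_power_mult_nth)
  also have "\<dots> = (\<Sum>j\<in>{1..N}. of_nat (a choose j) * (P ^ (k * j)) $ (N - j))"
    by (rule sum.mono_neutral_cong) (use assms in \<open>auto simp: not_le\<close>)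
  finally show ?thesis .
qed

lemma power_nth:
  "N \<ge> 1 \<Longrightarrow> (P ^ a) $ N = of_nat a / of_nat N * of_nat ((k * N + a - 1) choose (N - 1))"
proof (induction N arbitrary: a rule: less_induct)
  case (less N)
  have summand: "of_nat (a choose j) * (P ^ (k * j)) $ (N - j)
      = of_nat (j * (a choose j) * (k * N choose (N - j))) / (of_nat N :: rat)"
    if j: "j \<in> {1..N}" for j
  proof (cases "j = N")
    case True then show ?thesis using less.prems by simp
  next
    case False
    with j have "N - j \<ge> 1" "N - j < N" by auto
    then have IH: "(P ^ (k * j)) $ (N - j)
        = of_nat (k * j) / of_nat (N - j) * of_nat ((k * N - 1) choose (N - j - 1))"
      using less.IH[of "N - j" "k * j"] j by (simp add: diff_mult_distrib2)
    have "(N - j) * (k * N choose (N - j)) = k * N * ((k * N - 1) choose (N - j - 1))"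
      using times_binomial_minus1_eq[of "N - j" "k * N"] \<open>N - j \<ge> 1\<close> by simp
    then have "of_nat (N - j) * of_nat (k * N choose (N - j))
        = (of_nat (k * N) * of_nat ((k * N - 1) choose (N - j - 1)) :: rat)"
      by (metis of_nat_mult)
    then show ?thesis
      unfolding IH using \<open>N - j \<ge> 1\<close> k_pos j by (simp add: field_simps)
  qed
  have "(P ^ a) $ N = (\<Sum>j=1..N. of_nat (j * (a choose j) * (k * N choose (N - j)))) / (of_nat N :: rat)"
    by (simp add: power_nth_recursion[OF less.prems] summand sum_divide_distrib)
  also have "\<dots> = of_nat (a * ((k * N + a - 1) choose (N - 1))) / of_nat N"
    by (simp only: of_nat_sum[symmetric] sum_times_choose_times_choose[OF less.prems])
  finally show ?case by simp
qed

definition choose_series :: "nat \<Rightarrow> rat fps" where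
  "choose_series a = Abs_fps (\<lambda>N. of_nat ((k * N + a) choose N))"

lemma choose_series_0: "choose_series 0 = choose_series 1 - fps_X * choose_series k"
proof (rule fps_ext)
  fix N
  show "choose_series 0 $ N = (choose_series 1 - fps_X * choose_series k) $ N"
  proof (cases N)
    case (Suc M)
    then have "k * N = k * M + k" by simp
    then show ?thesis using Suc by (simp add: choose_series_def fps_X_mult_nth add.commute)
  qed (simp add: choose_series_def)
qed

lemma const_mult_choose_series:
  assumes "a \<ge> 1"
  shows "fps_const (of_nat a) * choose_series a
           = fps_const (of_nat k) * (fps_X * fps_deriv (P ^ a)) + fps_const (of_nat a) * P ^ a"
proof (rule fps_ext)
  fix N
  show "(fps_const (of_nat a) * choose_series a) $ N
      = (fps_const (of_nat k) * (fps_X * fps_deriv (P ^ a)) + fps_const (of_nat a) * P ^ a) $ N"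
  proof (cases "N = 0")
    case False
    define B where "B = (of_nat ((k * N + a - 1) choose (N - 1)) :: rat)"
    have "N * ((k * N + a) choose N) = (k * N + a) * ((k * N + a - 1) choose (N - 1))"
      using times_binomial_minus1_eq[of N "k * N + a"] False by simp
    then have C: "of_nat N * of_nat ((k * N + a) choose N) = (of_nat k * of_nat N + of_nat a) * B"
      unfolding B_def by (metis of_nat_add of_nat_mult)
    have "(fps_const (of_nat k) * (fps_X * fps_deriv (P ^ a)) + fps_const (of_nat a) * P ^ a) $ N
        = of_nat k * (of_nat N * (of_nat a / of_nat N * B)) + of_nat a * (of_nat a / of_nat N * B)"
      using power_nth[of N a] False
      by (simp only: fps_add_nth fps_mult_left_const_nth fps_X_mult_deriv_nth B_def)
    also have "\<dots> = of_nat a / of_nat N * ((of_nat k * of_nat N + of_nat a) * B)"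
      by (simp add: algebra_simps)
    also have "\<dots> = of_nat a * of_nat ((k * N + a) choose N)"
      using False by (simp flip: C)
    finally show ?thesis by (simp add: choose_series_def)
  qed (simp add: choose_series_def)
qed

lemma X_mult_deriv_eq:
  "fps_X * fps_deriv P
     = Abs_fps (\<lambda>N. if N = 0 then 0 else of_nat ((k * N) choose N) / of_nat k) * P"
proof -
  define c where "c = fps_const (of_nat k :: rat)"
  have "c \<noteq> 0" using k_pos by (simp add: c_def)
  have B1: "choose_series 1 = c * (fps_X * fps_deriv P) + P"
    using const_mult_choose_series[of 1] by (simp add: c_def)
  have "c * choose_series k = c * (fps_X * fps_deriv (P ^ k)) + c * P ^ k"
    using const_mult_choose_series[of k] k_pos by (simp add: c_def)
  then have "c * choose_series k = c * (fps_X * (c * fps_deriv P * P ^ (k - 1)) + P ^ k)"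
    by (simp add: c_def fps_deriv_power algebra_simps fps_of_nat)
  then have Bk: "choose_series k = fps_X * (c * fps_deriv P * P ^ (k - 1)) + P ^ k"
    using \<open>c \<noteq> 0\<close> mult_cancel_left by blast
  have XPk: "fps_X * P ^ k = P - 1" using arg_cong[OF fixpoint, of "\<lambda>Q. Q - 1"] by simp
  have Pk: "P ^ (k - 1) * P = P ^ k" using k_pos by (simp flip: power_Suc2)
  have ring_identity: "(c * (fps_X * D) + P - fps_X * (fps_X * (c * D * Q) + R) - 1) * P = c * (fps_X * D)"
    if XR: "fps_X * R = P - 1" and QP: "Q * P = R" for D Q R :: "rat fps"
  proof -
    have "(c * (fps_X * D) + P - fps_X * (fps_X * (c * D * Q) + R) - 1) * P
        = c * (fps_X * D) * P + P * P - c * fps_X * D * (fps_X * (Q * P)) - (fps_X * R) * P - P"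
      by (simp add: algebra_simps)
    also have "\<dots> = c * (fps_X * D)" unfolding XR QP by (simp add: algebra_simps)
    finally show ?thesis .
  qed
  have "fps_X * fps_deriv P = fps_const (1 / of_nat k) * (c * (fps_X * fps_deriv P))"
    using k_pos by (simp add: c_def flip: mult.assoc)
  also have "\<dots> = fps_const (1 / of_nat k) * ((choose_series 0 - 1) * P)"
    unfolding choose_series_0 B1 Bk ring_identity[OF XPk Pk] ..
  also have "\<dots> = fps_const (1 / of_nat k) * (choose_series 0 - 1) * P"
    by (simp only: mult.assoc)
  also have "fps_const (1 / of_nat k) * (choose_series 0 - 1)
      = Abs_fps (\<lambda>N. if N = 0 then 0 else of_nat ((k * N) choose N) / of_nat k)"
    by (rule fps_ext) (simp add: choose_series_def)
  finally show ?thesis .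
qed

end

section \<open>Products of power series\<close>

definition fps_one_upto :: "nat \<Rightarrow> 'a::comm_semiring_1 fps \<Rightarrow> bool" where
  "fps_one_upto j F \<longleftrightarrow> F $ 0 = 1 \<and> (\<forall>i. 0 < i \<and> i \<le> j \<longrightarrow> F $ i = 0)"

lemma fps_one_upto_mono: "fps_one_upto j F \<Longrightarrow> i \<le> j \<Longrightarrow> fps_one_upto i F"
  by (auto simp: fps_one_upto_def)

lemma mult_fps_one_upto_nth:
  assumes "fps_one_upto j B" "i \<le> j"
  shows "(A * B) $ i = A $ i"
proof -
  have "(A * B) $ i = (\<Sum>t=0..i. if t = i then A $ i else 0)"
    unfolding fps_mult_nth using assms by (intro sum.cong) (auto simp: fps_one_upto_def)
  then show ?thesis by simp
qed

lemma mult_fps_one_upto_nth_Suc: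
  assumes "fps_one_upto j B"
  shows "(A * B) $ Suc j = A $ Suc j + A $ 0 * B $ Suc j"
proof -
  have "(A * B) $ Suc j = (\<Sum>t=0..Suc j. (if t = Suc j then A $ Suc j else 0) + (if t = 0 then A $ 0 * B $ Suc j else 0))"
    unfolding fps_mult_nth using assms by (intro sum.cong) (auto simp: fps_one_upto_def)
  then show ?thesis by (simp add: sum.distrib)
qed

lemma fps_one_upto_mult:
  assumes "fps_one_upto j A" "fps_one_upto j B"
  shows "fps_one_upto j (A * B)" "(A * B) $ Suc j = A $ Suc j + B $ Suc j"
  using assms mult_fps_one_upto_nth[OF assms(2)] mult_fps_one_upto_nth_Suc[OF assms(2)]
  by (auto simp: fps_one_upto_def)

lemma fps_one_upto_power:
  assumes "fps_one_upto j A"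
  shows "fps_one_upto j (A ^ p) \<and> (A ^ p) $ Suc j = of_nat p * A $ Suc j"
proof (induction p)
  case 0 then show ?case by (simp add: fps_one_upto_def)
next
  case (Suc p)
  then show ?case using fps_one_upto_mult[OF assms, of "A ^ p"] by (simp add: algebra_simps)
qed

lemma fps_one_upto_prod:
  "(\<And>n. n \<in> S \<Longrightarrow> fps_one_upto j (F n)) \<Longrightarrow> fps_one_upto j (\<Prod>n\<in>S. F n)"
proof (induction S rule: infinite_finite_induct)
  case (insert x S) then show ?case by (auto intro!: fps_one_upto_mult(1))
qed (simp_all add: fps_one_upto_def)

definition X_log_deriv :: "'a::comm_ring_1 fps \<Rightarrow> 'a fps \<Rightarrow> bool" where
  "X_log_deriv F L \<longleftrightarrow> fps_X * fps_deriv F = L * F"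

lemma X_log_deriv_mult: "X_log_deriv A LA \<Longrightarrow> X_log_deriv B LB \<Longrightarrow> X_log_deriv (A * B) (LA + LB)"
  by (simp add: X_log_deriv_def algebra_simps)

lemma X_log_deriv_power: "X_log_deriv A L \<Longrightarrow> X_log_deriv (A ^ p) (of_nat p * L)"
proof (induction p)
  case (Suc p)
  from X_log_deriv_mult[OF Suc.prems Suc.IH[OF Suc.prems]] show ?case by (simp add: algebra_simps)
qed (simp add: X_log_deriv_def)

lemma X_log_deriv_prod:
  "(\<And>n. n \<in> S \<Longrightarrow> X_log_deriv (F n) (L n)) \<Longrightarrow> X_log_deriv (\<Prod>n\<in>S. F n) (\<Sum>n\<in>S. L n)"
proof (induction S rule: infinite_finite_induct)
  case (insert x S) then show ?case by (auto intro!: X_log_deriv_mult)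
qed (simp_all add: X_log_deriv_def)

lemma X_log_deriv_inverse:
  assumes "A * B = 1" "X_log_deriv A L"
  shows "X_log_deriv B (- L)"
proof -
  have "fps_deriv (A * B) = 0" using assms(1) by simp
  then have "A * fps_deriv B = - (fps_deriv A * B)" by (simp add: eq_neg_iff_add_eq_0)
  have "fps_X * fps_deriv B = fps_X * fps_deriv B * (A * B)"
    using assms(1) by simp
  also have "\<dots> = fps_X * (A * fps_deriv B) * B"
    by (simp add: algebra_simps)
  also have "\<dots> = - ((fps_X * fps_deriv A) * B * B)"
    unfolding \<open>A * fps_deriv B = - (fps_deriv A * B)\<close> by (simp add: algebra_simps)
  also have "\<dots> = - L * B * (A * B)"
    using assms(2) by (simp add: X_log_deriv_def algebra_simps)
  also have "\<dots> = - L * B"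
    using assms(1) by simp
  finally show ?thesis by (simp add: X_log_deriv_def)
qed

definition int_coeffs_upto :: "nat \<Rightarrow> 'a::ring_1 fps \<Rightarrow> bool" where
  "int_coeffs_upto M F \<longleftrightarrow> (\<forall>i\<le>M. F $ i \<in> \<int>)"

lemma int_coeffs_upto_mult: "int_coeffs_upto M A \<Longrightarrow> int_coeffs_upto M B \<Longrightarrow> int_coeffs_upto M (A * B)"
  unfolding int_coeffs_upto_def fps_mult_nth by (auto intro!: Ints_sum Ints_mult)

lemma int_coeffs_upto_power: "int_coeffs_upto M A \<Longrightarrow> int_coeffs_upto M (A ^ p)"
proof (induction p)
  case (Suc p) then show ?case using int_coeffs_upto_mult by simp
qed (simp add: int_coeffs_upto_def)

lemma int_coeffs_upto_prod:
  "(\<And>n. n \<in> S \<Longrightarrow> int_coeffs_upto M (F n)) \<Longrightarrow> int_coeffs_upto M (\<Prod>n\<in>S. F n)"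
proof (induction S rule: infinite_finite_induct)
  case (insert x S) then show ?case by (auto intro!: int_coeffs_upto_mult)
qed (simp_all add: int_coeffs_upto_def)

lemma (in lagrange_series) int_coeffs_upto: "int_coeffs_upto M P"
proof (induction M)
  case 0 then show ?case by (simp add: int_coeffs_upto_def nth_0)
next
  case (Suc M)
  have "P $ Suc M = (P ^ k) $ M"
    by (subst fixpoint) (simp add: fps_X_mult_nth)
  then have "P $ Suc M \<in> \<int>"
    using int_coeffs_upto_power[OF Suc.IH, of k] by (simp add: int_coeffs_upto_def)
  then show ?case using Suc.IH by (auto simp: int_coeffs_upto_def le_Suc_eq)
qed

definition herd_factor :: "'a::field \<Rightarrow> nat \<Rightarrow> 'a fps" where
  "herd_factor c n = 1 - fps_const c * fps_X ^ n"

definition herd_factor_inv :: "'a::field \<Rightarrow> nat \<Rightarrow> 'a fps" where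
  "herd_factor_inv c n = Abs_fps (\<lambda>j. if n dvd j then c ^ (j div n) else 0)"

lemma herd_factor_mult_inv:
  assumes n: "n \<ge> 1"
  shows "herd_factor c n * herd_factor_inv c n = 1"
proof (rule fps_ext)
  fix j
  have "herd_factor_inv c n $ j - c * (if j < n then 0 else herd_factor_inv c n $ (j - n)) = (1 :: 'a fps) $ j"
  proof (cases "j < n")
    case True then show ?thesis using n by (cases "j = 0") (auto simp: herd_factor_inv_def dest: dvd_imp_le)
  next
    case False
    then have dv: "n dvd (j - n) \<longleftrightarrow> n dvd j" by (simp add: dvd_minus_self)
    show ?thesis
    proof (cases "n dvd j")
      case True
      then obtain q where q: "j = n * q" by auto
      with False n have "q \<ge> 1" by (cases q) auto
      then have "(j - n) div n = q - 1" "j div n = q"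
        using q n by (simp_all add: diff_mult_distrib2[symmetric, of n q 1, simplified])
      then show ?thesis using True dv False n \<open>q \<ge> 1\<close> by (simp add: herd_factor_inv_def power_eq_if)
    qed (use dv False n in \<open>simp add: herd_factor_inv_def\<close>)
  qed
  moreover have "(fps_const c * fps_X ^ n * herd_factor_inv c n) $ j
      = c * (if j < n then 0 else herd_factor_inv c n $ (j - n))"
    by (simp add: mult.assoc fps_X_power_mult_nth)
  ultimately show "(herd_factor c n * herd_factor_inv c n) $ j = (1 :: 'a fps) $ j"
    by (simp add: herd_factor_def left_diff_distrib)
qed

lemma inverse_herd_factor: "n \<ge> 1 \<Longrightarrow> inverse (herd_factor c n) = herd_factor_inv c n"
  by (rule fps_inverse_unique[OF herd_factor_mult_inv])

lemma fps_one_upto_herd_factor: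
  "n \<ge> 1 \<Longrightarrow> fps_one_upto (n - 1) (herd_factor c n) \<and> herd_factor c n $ n = - c"
  by (auto simp: fps_one_upto_def herd_factor_def)

lemma fps_one_upto_herd_factor_inv:
  "n \<ge> 1 \<Longrightarrow> fps_one_upto (n - 1) (herd_factor_inv c n) \<and> herd_factor_inv c n $ n = c"
  by (auto simp: fps_one_upto_def herd_factor_inv_def dest: dvd_imp_le)

lemma fps_one_upto_ipow_herd_factor:
  assumes n: "n \<ge> 1"
  shows "fps_one_upto (n - 1) (fps_ipow (herd_factor c n) a)
           \<and> fps_ipow (herd_factor c n) a $ n = - of_int a * c"
proof (cases "0 \<le> a")
  case True
  have "Suc (n - 1) = n" using n by simp
  then show ?thesis
    using True fps_one_upto_power[of "n - 1" "herd_factor c n" "nat a"] fps_one_upto_herd_factor[OF n, of c]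
    by (simp add: fps_ipow_def)
next
  case False
  have "Suc (n - 1) = n" using n by simp
  then show ?thesis
    using False fps_one_upto_power[of "n - 1" "herd_factor_inv c n" "nat (- a)"]
      fps_one_upto_herd_factor_inv[OF n, of c]
    by (simp add: fps_ipow_def inverse_herd_factor[OF n])
qed

definition herd_factor_log_deriv :: "'a::field \<Rightarrow> nat \<Rightarrow> 'a fps" where
  "herd_factor_log_deriv c n = - (fps_const (of_nat n * c) * fps_X ^ n * herd_factor_inv c n)"

lemma X_log_deriv_herd_factor:
  assumes n: "n \<ge> 1"
  shows "X_log_deriv (herd_factor c n) (herd_factor_log_deriv c n)"
proof -
  have "fps_X * fps_X ^ (n - 1) = (fps_X ^ n :: 'a fps)" using n by (simp flip: power_Suc)
  then have "fps_X * fps_deriv (herd_factor c n) = - (fps_const (of_nat n * c) * fps_X ^ n)"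
    by (simp add: herd_factor_def fps_deriv_power fps_of_nat algebra_simps
        fps_const_mult[symmetric] del: fps_const_mult)
  also have "\<dots> = - (fps_const (of_nat n * c) * fps_X ^ n) * (herd_factor c n * herd_factor_inv c n)"
    using herd_factor_mult_inv[OF n, of c] by simp
  also have "\<dots> = herd_factor_log_deriv c n * herd_factor c n"
    unfolding herd_factor_log_deriv_def by (simp add: mult_ac)
  finally show ?thesis by (simp add: X_log_deriv_def)
qed

lemma X_log_deriv_ipow_herd_factor:
  fixes c :: rat
  assumes n: "n \<ge> 1"
  shows "X_log_deriv (fps_ipow (herd_factor c n) a) (of_int a * herd_factor_log_deriv c n)"
proof (cases "0 \<le> a")
  case True
  then show ?thesis
    using X_log_deriv_power[OF X_log_deriv_herd_factor[OF n, of c], where p = "nat a"]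
    by (simp add: fps_ipow_def)
next
  case False
  have "X_log_deriv (herd_factor_inv c n) (- herd_factor_log_deriv c n)"
    by (rule X_log_deriv_inverse[OF herd_factor_mult_inv[OF n] X_log_deriv_herd_factor[OF n]])
  from X_log_deriv_power[OF this, where p = "nat (- a)"] False show ?thesis
    by (simp add: fps_ipow_def inverse_herd_factor[OF n])
qed

lemma herd_factor_log_deriv_nth:
  assumes n: "n \<ge> 1" and N: "N \<ge> 1"
  shows "herd_factor_log_deriv c n $ N = (if n dvd N then - (of_nat n * c ^ (N div n)) else 0)"
proof -
  have "herd_factor_log_deriv c n $ N = - (of_nat n * c * (if N < n then 0 else herd_factor_inv c n $ (N - n)))"
    unfolding herd_factor_log_deriv_def by (simp add: mult.assoc fps_X_power_mult_nth)
  also have "\<dots> = (if n dvd N then - (of_nat n * c ^ (N div n)) else 0)"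
  proof (cases "n dvd N")
    case True
    then obtain q where q: "N = n * q" by auto
    with N have "q \<ge> 1" by (cases q) auto
    then have "(N - n) div n = q - 1" "N div n = q" "\<not> N < n" "n dvd N - n"
      using q n True by (simp_all add: diff_mult_distrib2[symmetric, of n q 1, simplified] dvd_diff_nat)
    then show ?thesis using True \<open>q \<ge> 1\<close> by (simp add: herd_factor_inv_def power_eq_if)
  next
    case False
    then have "\<not> n dvd (N - n) \<or> N < n" by (metis dvd_minus_self linorder_not_less)
    then show ?thesis using False by (auto simp: herd_factor_inv_def)
  qed
  finally show ?thesis .
qed

lemma int_coeffs_upto_ipow_herd_factor:
  assumes "c \<in> \<int>" "n \<ge> 1"
  shows "int_coeffs_upto M (fps_ipow (herd_factor c n) a)"
proof -
  have "int_coeffs_upto M (herd_factor c n)" "int_coeffs_upto M (herd_factor_inv c n)"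
    using assms by (auto simp: int_coeffs_upto_def herd_factor_def herd_factor_inv_def)
  then show ?thesis
    using assms by (auto simp: fps_ipow_def inverse_herd_factor intro!: int_coeffs_upto_power)
qed

section \<open>The herd factorisation\<close>

lemma X_log_deriv_nth_eq:
  fixes P Q G H :: "'a::field fps"
  assumes "X_log_deriv P G" "X_log_deriv Q H" "P $ 0 = 1" "Q $ 0 = 1"
    and agree: "\<And>j. j \<le> M \<Longrightarrow> Q $ j = P $ j" and "j \<le> M"
  shows "G $ j = H $ j"
  using \<open>j \<le> M\<close>
proof (induction j rule: less_induct)
  case (less j)
  have split: "(A * B) $ j = A $ j * B $ 0 + (\<Sum>i=0..<j. A $ i * B $ (j - i))" for A B :: "'a fps"
    unfolding fps_mult_nth by (simp add: atLeastLessThanSuc_atLeastAtMost[symmetric] add.commute)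
  have "(G * P) $ j = (fps_X * fps_deriv P) $ j" "(H * Q) $ j = (fps_X * fps_deriv Q) $ j"
    using assms(1,2) by (simp_all add: X_log_deriv_def)
  then have "(G * P) $ j = (H * Q) $ j"
    using agree[OF less.prems] by (simp add: fps_X_mult_deriv_nth)
  moreover have "(\<Sum>i=0..<j. G $ i * P $ (j - i)) = (\<Sum>i=0..<j. H $ i * Q $ (j - i))"
    using less agree by (intro sum.cong) auto
  ultimately show ?case unfolding split using assms(3,4) by simp
qed

definition herd_sign :: "nat \<Rightarrow> nat \<Rightarrow> rat" where
  "herd_sign m n = of_int ((-1) ^ (m * n))"

lemma herd_sign_Ints: "herd_sign m n \<in> \<int>"
  by (simp add: herd_sign_def)

lemma herd_sign_mult_self: "herd_sign m n * herd_sign m n = 1"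
  by (simp add: herd_sign_def flip: power_add)

lemma herd_sign_power: "n dvd N \<Longrightarrow> n > 0 \<Longrightarrow> herd_sign m n ^ (N div n) = (-1) ^ (m * N)"
  by (auto simp: herd_sign_def power_mult[symmetric] mult.assoc elim!: dvdE)

definition herd_partial :: "nat \<Rightarrow> (nat \<Rightarrow> int) \<Rightarrow> nat \<Rightarrow> rat fps" where
  "herd_partial m \<alpha> M = (\<Prod>n\<in>{1..M}. fps_ipow (herd_factor (herd_sign m n) n) (\<alpha> n))"

lemma herd_factorization_iff_partial:
  "herd_factorization m P \<alpha> \<longleftrightarrow> (\<forall>N. P $ N = herd_partial m \<alpha> N $ N)"
proof -
  have "1 - of_int ((-1) ^ (m * n)) * fps_X ^ n = herd_factor (herd_sign m n) n" for n
    by (simp only: herd_factor_def herd_sign_def fps_of_int)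
  then show ?thesis by (simp only: herd_factorization_def herd_partial_def)
qed

lemma herd_partial_Suc:
  "herd_partial m \<alpha> (Suc M)
     = herd_partial m \<alpha> M * fps_ipow (herd_factor (herd_sign m (Suc M)) (Suc M)) (\<alpha> (Suc M))"
  unfolding herd_partial_def by (simp add: atLeastAtMostSuc_conv mult.commute)

lemma fps_one_upto_herd_tail:
  "fps_one_upto j (\<Prod>n\<in>{Suc j..M}. fps_ipow (herd_factor (herd_sign m n) n) (\<alpha> n))"
  by (rule fps_one_upto_prod) (auto intro: fps_one_upto_mono[OF conjunct1[OF fps_one_upto_ipow_herd_factor]])

lemma herd_partial_nth_0: "herd_partial m \<alpha> M $ 0 = 1"
  using fps_one_upto_herd_tail[where j = 0 and M = M] by (simp add: herd_partial_def fps_one_upto_def)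

lemma herd_partial_nth_stable:
  assumes "j \<le> M" "i \<le> j"
  shows "herd_partial m \<alpha> M $ i = herd_partial m \<alpha> j $ i"
proof -
  have "{1..M} = {1..j} \<union> {Suc j..M}" using assms by auto
  then have "herd_partial m \<alpha> M
      = herd_partial m \<alpha> j * (\<Prod>n\<in>{Suc j..M}. fps_ipow (herd_factor (herd_sign m n) n) (\<alpha> n))"
    unfolding herd_partial_def by (simp add: prod.union_disjoint[symmetric] ivl_disj_int)
  then show ?thesis using mult_fps_one_upto_nth[OF fps_one_upto_herd_tail assms(2)] by simp
qed

lemma X_log_deriv_herd_partial:
  "X_log_deriv (herd_partial m \<alpha> M) (\<Sum>n\<in>{1..M}. of_int (\<alpha> n) * herd_factor_log_deriv (herd_sign m n) n)"
  unfolding herd_partial_def by (rule X_log_deriv_prod) (auto intro: X_log_deriv_ipow_herd_factor)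

lemma int_coeffs_upto_herd_partial: "int_coeffs_upto M (herd_partial m \<alpha> N)"
  unfolding herd_partial_def
  by (rule int_coeffs_upto_prod) (auto intro: int_coeffs_upto_ipow_herd_factor herd_sign_Ints)

text \<open>With \<open>Q\<close> the product of the earlier factors and \<open>s = \<plusminus>1\<close>, the \<open>N\<close>-th factor shifts the
  coefficient of \<open>z\<^sup>N\<close> by \<open>-\<alpha>\<^sub>N s\<close>, so \<open>\<alpha>\<^sub>N = s (Q $ N - P $ N)\<close> is forced; the floor only
  converts this integer to \<open>int\<close>.\<close>
function herd_exponent :: "nat \<Rightarrow> rat fps \<Rightarrow> nat \<Rightarrow> int" where
  "herd_exponent m P N = (if N = 0 then 0 else
     \<lfloor>herd_sign m N * ((\<Prod>n\<in>{1..<N}. fps_ipow (herd_factor (herd_sign m n) n) (herd_exponent m P n)) $ N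
        - P $ N)\<rfloor>)"
  by auto
termination by (relation "measure (\<lambda>(m, P, N). N)") auto

declare herd_exponent.simps [simp del]

lemma herd_exponent_Suc:
  "herd_exponent m P (Suc M)
     = \<lfloor>herd_sign m (Suc M) * (herd_partial m (herd_exponent m P) M $ Suc M - P $ Suc M)\<rfloor>"
proof -
  have "{1..<Suc M} = {1..M}" by auto
  then show ?thesis unfolding herd_partial_def by (subst herd_exponent.simps) simp
qed

lemma herd_partial_herd_exponent_nth:
  assumes P0: "P $ 0 = 1" and P_int: "\<And>M. int_coeffs_upto M P" and "j \<le> M"
  shows "herd_partial m (herd_exponent m P) M $ j = P $ j"
  using \<open>j \<le> M\<close>
proof (induction M arbitrary: j)
  case 0 then show ?case using P0 herd_partial_nth_0 by simp
next
  case (Suc M)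
  define s where "s = herd_sign m (Suc M)"
  define a where "a = herd_exponent m P (Suc M)"
  define F where "F = fps_ipow (herd_factor s (Suc M)) a"
  define Q where "Q = herd_partial m (herd_exponent m P) M"
  have QF: "herd_partial m (herd_exponent m P) (Suc M) = Q * F"
    unfolding herd_partial_Suc F_def s_def a_def Q_def ..
  have F: "fps_one_upto M F" "F $ Suc M = - of_int a * s"
    using fps_one_upto_ipow_herd_factor[of "Suc M" s a] by (simp_all add: F_def)
  have "s * (Q $ Suc M - P $ Suc M) \<in> \<int>"
    using int_coeffs_upto_herd_partial[of "Suc M"] P_int[of "Suc M"] herd_sign_Ints
    by (simp add: int_coeffs_upto_def s_def Q_def)
  then have a: "of_int a = s * (Q $ Suc M - P $ Suc M)"
    unfolding a_def herd_exponent_Suc s_def[symmetric] Q_def[symmetric] by (auto elim!: Ints_cases)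
  show ?case
  proof (cases "j = Suc M")
    case True
    have "(Q * F) $ Suc M = Q $ Suc M - (s * s) * (Q $ Suc M - P $ Suc M)"
      unfolding mult_fps_one_upto_nth_Suc[OF F(1)] F(2) a
      by (simp add: Q_def herd_partial_nth_0 algebra_simps)
    then show ?thesis using True herd_sign_mult_self by (simp add: QF s_def)
  next
    case False
    then show ?thesis using Suc mult_fps_one_upto_nth[OF F(1)] by (simp add: QF Q_def)
  qed
qed

lemma herd_factorization_exists:
  assumes "P $ 0 = 1" and "\<And>M. int_coeffs_upto M P"
  shows "herd_factorization m P (herd_exponent m P)"
  using herd_partial_herd_exponent_nth[OF assms] by (simp add: herd_factorization_iff_partial)

text \<open>Comparing \<open>z\<^sup>M\<close> in the logarithmic derivatives of \<open>P\<close> and of the factorisation.\<close>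
lemma herd_factorization_sum_divisors:
  assumes herd: "herd_factorization m P \<alpha>" and "P $ 0 = 1" and "X_log_deriv P G" and "M \<ge> 1"
  shows "(\<Sum>e | e dvd M. of_nat e * of_int (\<alpha> e)) = - ((-1) ^ (m * M) * G $ M)"
proof -
  define s where "s = (-1::rat) ^ (m * M)"
  define S where "S = (\<Sum>e | e dvd M. of_nat e * (of_int (\<alpha> e) :: rat))"
  define H where "H = (\<Sum>n\<in>{1..M}. of_int (\<alpha> n) * herd_factor_log_deriv (herd_sign m n) n)"
  have agree: "herd_partial m \<alpha> M $ j = P $ j" if "j \<le> M" for j
    using herd_partial_nth_stable[OF that order_refl] herd by (simp add: herd_factorization_iff_partial)
  have "G $ M = H $ M"
    using X_log_deriv_nth_eq[OF assms(3) X_log_deriv_herd_partial assms(2) herd_partial_nth_0 agree]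
    by (simp add: H_def)
  also have "H $ M = (\<Sum>n\<in>{1..M}. if n dvd M then - ((-1) ^ (m * M) * (of_nat n * of_int (\<alpha> n))) else 0)"
    unfolding H_def fps_sum_nth using \<open>M \<ge> 1\<close>
    by (intro sum.cong) (simp_all add: herd_factor_log_deriv_nth herd_sign_power fps_of_int[symmetric])
  also have "\<dots> = - ((-1) ^ (m * M) * (\<Sum>n\<in>{n \<in> {1..M}. n dvd M}. of_nat n * of_int (\<alpha> n)))"
    by (simp add: sum.inter_filter[symmetric] sum_negf sum_distrib_left)
  also have "{n \<in> {1..M}. n dvd M} = {e. e dvd M}"
    using \<open>M \<ge> 1\<close> by (auto dest: dvd_imp_le intro: Nat.gr0I)
  finally have G: "G $ M = - (s * S)" by (simp add: s_def S_def)
  have "s * s = 1" by (simp add: s_def flip: power_add)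
  then have "S = - (s * G $ M)" unfolding G by (simp add: algebra_simps)
  then show ?thesis by (simp add: s_def S_def)
qed

lemma (in lagrange_series) herd_exponent_mobius:
  assumes "herd_factorization m P \<alpha>" and "n \<ge> 1"
  shows "of_nat k * (of_nat n * of_int (\<alpha> n))
           = (\<Sum>d | d dvd n. of_int ((-1) ^ (m * d + 1) * mobius (n div d)) * of_nat ((k * d) choose d) :: rat)"
proof -
  define F where "F d = - ((-1) ^ (m * d) * of_nat ((k * d) choose d) / (of_nat k :: rat))" for d
  have "X_log_deriv P (Abs_fps (\<lambda>N. if N = 0 then 0 else of_nat ((k * N) choose N) / of_nat k))"
    using X_mult_deriv_eq by (simp add: X_log_deriv_def)
  from herd_factorization_sum_divisors[OF assms(1) nth_0 this]
  have F_sum: "F d = (\<Sum>e | e dvd d. of_nat e * of_int (\<alpha> e))" if "d > 0" for d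
    using that by (simp add: F_def)
  have "of_nat n * of_int (\<alpha> n) = (\<Sum>d | d dvd n. of_int (mobius (n div d)) * F d)"
    using mobius_inversion[where g = "\<lambda>e. of_nat e * of_int (\<alpha> e)", OF F_sum] assms(2) by simp
  then show ?thesis
    using k_pos by (simp add: sum_distrib_left F_def mult_ac)
qed

theorem mainTheorem1:
  fixes m :: nat and P :: "rat fps"
  assumes "m \<ge> 2"
    and "fps_nth P 0 = 1"
    and "P = 1 + fps_X * P ^ ((m - 1)^2)"
  shows "(\<exists>\<alpha> :: nat \<Rightarrow> int. herd_factorization m P \<alpha>) \<and>
         (\<forall>\<alpha> :: nat \<Rightarrow> int. herd_factorization m P \<alpha> \<longrightarrow>
            (\<forall>n \<ge> 1. of_nat m * of_int (\<alpha> n) / of_nat n =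
               (of_nat m / (of_nat ((m - 1)^2) * of_nat n ^ 2)) *
               (\<Sum>d | d dvd n. of_int ((-1) ^ (m * d + 1) * mobius (n div d))
                                  * of_nat (((m - 1)^2 * d) choose d) :: rat)))"
proof -
  define k where "k = (m - 1)^2"
  interpret lagrange_series k P
    using assms by unfold_locales (simp_all add: k_def)
  have "herd_factorization m P (herd_exponent m P)"
    using herd_factorization_exists nth_0 int_coeffs_upto by blast
  moreover have "of_nat m * of_int (\<alpha> n) / of_nat n =
      (of_nat m / (of_nat ((m - 1)^2) * of_nat n ^ 2)) *
      (\<Sum>d | d dvd n. of_int ((-1) ^ (m * d + 1) * mobius (n div d))
                         * of_nat (((m - 1)^2 * d) choose d) :: rat)"
    if "herd_factorization m P \<alpha>" "n \<ge> 1" for \<alpha> n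
    unfolding k_def[symmetric] herd_exponent_mobius[OF that, symmetric] using that k_pos
    by (simp add: field_simps power2_eq_square)
  ultimately show ?thesis by blast
qed

end
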